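(* Let $V$ be real-valued and absolutely continuous on $[0,\pi]$ and let $a\in(0,\pi]$. There are constants $C_1>0$ (depending on $V$) and $C_2,C_3>0$ (depending on $V$ and $a$) such that for all $z\in\mathbb C$ and $n\in\mathbb N$: $$\left|\int_0^\pi F(x,z)\cos(nx)\,dx\right|\le C_1\frac{e^{\pi|\operatorname{Im}\sqrt z|}}{n^2}\left(1+\frac{1+|z|}{1+\pi|z|^{1/2}}\right),$$ $$\left|\int_0^a\rho(x)\cos(\sqrt z\,x)\sin(nx)\,dx\right|\le C_2\frac{e^{\pi|\operatorname{Im}\sqrt z|}}{n}\left(1+\frac{|z|}{1+\pi|z|^{1/2}}\right),$$ $$\left|\int_0^a\rho(x)F(x,z)\sin(nx)\,dx\right|\le C_3\frac{e^{\pi|\operatorname{Im}\sqrt z|}}{n}\left(1+\frac{1}{1+\pi|z|^{1/2}}\right).$$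
   Context: $\sqrt{\cdot}$ is the principal branch. $\xi(x,z)$ is the solution of $-\xi''+V\xi=z\xi$, $\xi(0,z)=1$, $\xi'(0,z)=0$. $F(x,z):=\xi(x,z)-\cos(\sqrt z\,x)$ and $\rho(x):=\frac12\int_0^xV(y)\,dy-\frac{x}{2\pi}\int_0^\pi V(y)\,dy$ for $x\in[0,\pi]$. *)

theory Defs
  imports "HOL-Analysis.Analysis"
begin

definition absolutely_continuous_on :: "real set \<Rightarrow> (real \<Rightarrow> real) \<Rightarrow> bool" where
  "absolutely_continuous_on S f \<longleftrightarrow>
     (\<forall>e>0. \<exists>d>0. \<forall>I :: (real \<times> real) set.
        finite I \<and> (\<forall>(a,b)\<in>I. a \<le> b \<and> {a..b} \<subseteq> S) \<and>
        pairwise (\<lambda>(a,b) (c,d). {a<..<b} \<inter> {c<..<d} = {}) I \<and>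
        (\<Sum>(a,b)\<in>I. b - a) < d
        \<longrightarrow> (\<Sum>(a,b)\<in>I. \<bar>f b - f a\<bar>) < e)"

text \<open>xi V x z: the solution of -xi'' + V xi = z xi on [0,pi] with xi(0)=1, xi'(0)=0
(set to 0 outside [0,pi] to make it unique as a function).\<close>
definition xi :: "(real \<Rightarrow> real) \<Rightarrow> real \<Rightarrow> complex \<Rightarrow> complex" where
  "xi V x z = (THE f. f 0 = 1 \<and>
      (\<exists>f'. f' 0 = 0 \<and>
         (\<forall>t\<in>{0..pi}. (f has_vector_derivative f' t) (at t within {0..pi}) \<and>
                       (f' has_vector_derivative ((complex_of_real (V t) - z) * f t)) (at t within {0..pi}))) \<and>
      (\<forall>t. t \<notin> {0..pi} \<longrightarrow> f t = 0)) x"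

definition F :: "(real \<Rightarrow> real) \<Rightarrow> real \<Rightarrow> complex \<Rightarrow> complex" where
  "F V x z = xi V x z - cos (csqrt z * complex_of_real x)"

definition rho :: "(real \<Rightarrow> real) \<Rightarrow> real \<Rightarrow> real" where
  "rho V x = (1/2) * integral {0..x} V - x / (2*pi) * integral {0..pi} V"

end

theory Submission
  imports Defs
begin

text \<open>
By variation of constants, \<open>\<xi>(x) - cos(\<surd>z x)\<close> is the Volterra integral of
\<open>sin(\<surd>z (x - t)) / \<surd>z \<cdot> V(t) \<xi>(t)\<close> over \<open>[0, x]\<close>, and Gronwall's inequality gives
\<open>|\<xi>(x)| \<le> K exp(|Im \<surd>z| x)\<close> with \<open>K\<close> depending only on \<open>sup |V|\<close>. Hence \<open>F\<close> and \<open>F'\<close>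
are bounded by a constant times \<open>exp(\<pi> |Im \<surd>z|)\<close>, and so is \<open>F'' = V \<xi> - z F\<close> up to a factor
\<open>1 + |z|^(1/2)\<close>, since \<open>\<surd>z F\<close> is again such a Volterra integral. Integrating by parts twice
against \<open>cos(nx)\<close> (the boundary terms vanish at \<open>0\<close> and \<open>\<pi>\<close>), resp. once against \<open>sin(nx)\<close>,
gives the factors \<open>1/n\<^sup>2\<close> and \<open>1/n\<close>; finally
\<open>1 + |z|^(1/2) \<le> (2 + \<pi>) (1 + |z| / (1 + \<pi> |z|^(1/2)))\<close>.
The solution \<open>\<xi>\<close> exists by Picard iteration and is unique by the same Gronwall estimate.
\<close>

section \<open>Free solutions\<close>

lemma norm_cos_le_exp_abs_Im:
  fixes u :: complex
  shows "norm (cos u) \<le> exp \<bar>Im u\<bar>"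
proof -
  have "norm (cos u) \<le> (norm (exp (\<i> * u)) + norm (exp (- (\<i> * u)))) / 2"
    unfolding cos_exp_eq
    by (metis divide_right_mono norm_divide norm_numeral norm_triangle_ineq zero_le_numeral)
  also have "\<dots> = (exp (- Im u) + exp (Im u)) / 2" by simp
  also have "\<dots> \<le> exp \<bar>Im u\<bar>" by (cases "Im u \<ge> 0") auto
  finally show ?thesis .
qed

lemma norm_sin_le_exp_abs_Im:
  fixes u :: complex
  shows "norm (sin u) \<le> exp \<bar>Im u\<bar>"
proof -
  have "norm (sin u) \<le> (norm (exp (\<i> * u)) + norm (exp (- (\<i> * u)))) / 2"
    unfolding sin_exp_eq norm_divide norm_mult
    using norm_triangle_ineq4[of "exp (\<i> * u)" "exp (- (\<i> * u))"]
    by (simp add: divide_right_mono)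
  also have "\<dots> = (exp (- Im u) + exp (Im u)) / 2" by simp
  also have "\<dots> \<le> exp \<bar>Im u\<bar>" by (cases "Im u \<ge> 0") auto
  finally show ?thesis .
qed

lemma exp_abs_Im_mult_le:
  assumes "0 \<le> s" "s \<le> pi"
  shows "exp (\<bar>Im w\<bar> * s) \<le> exp (pi * \<bar>Im w\<bar>)"
  using assms mult_left_mono[of s pi "\<bar>Im w\<bar>"] by (simp add: mult.commute)

definition cos_free :: "complex \<Rightarrow> real \<Rightarrow> complex" where
  "cos_free w s = cos (w * of_real s)"

text \<open>\<open>cos_free w\<close> and \<open>sin_free w\<close> solve \<open>y'' = - w\<^sup>2 y\<close> with initial data \<open>(1, 0)\<close> and
  \<open>(0, 1)\<close>; at \<open>w = 0\<close>, \<open>sin_free\<close> is the limit \<open>s\<close>.\<close>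
definition sin_free :: "complex \<Rightarrow> real \<Rightarrow> complex" where
  "sin_free w s = (if w = 0 then of_real s else sin (w * of_real s) / w)"

lemma cos_free_0 [simp]: "cos_free w 0 = 1"
  and sin_free_0 [simp]: "sin_free w 0 = 0"
  by (auto simp: cos_free_def sin_free_def)

lemma has_vector_derivative_cos_free:
  "(cos_free w has_vector_derivative - (w * w) * sin_free w s) (at s within T)"
proof -
  have "((\<lambda>u. cos (w * u)) has_field_derivative - sin (w * of_real s) * w) (at (of_real s))"
    by (auto intro!: derivative_eq_intros)
  then have "((\<lambda>x. cos (w * of_real x)) has_vector_derivative - sin (w * of_real s) * w)
      (at s within T)"
    by (rule has_vector_derivative_real_field)
  moreover have "- sin (w * of_real s) * w = - (w * w) * sin_free w s"
    by (auto simp: sin_free_def)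
  ultimately show ?thesis
    unfolding cos_free_def[abs_def] by metis
qed

lemma has_vector_derivative_sin_free:
  "(sin_free w has_vector_derivative cos_free w s) (at s within T)"
proof (cases "w = 0")
  case True
  have "((\<lambda>x. complex_of_real x) has_vector_derivative 1) (at s within T)"
    using has_vector_derivative_of_real[OF DERIV_ident] by simp
  with True show ?thesis by (simp add: sin_free_def[abs_def] cos_free_def)
next
  case False
  have "((\<lambda>u. sin (w * u) / w) has_field_derivative cos (w * of_real s) * w / w) (at (of_real s))"
    by (auto intro!: derivative_eq_intros)
  then have "((\<lambda>x. sin (w * of_real x) / w) has_vector_derivative cos (w * of_real s) * w / w)
      (at s within T)"
    by (rule has_vector_derivative_real_field)
  with False show ?thesis by (simp add: sin_free_def[abs_def] cos_free_def)
qed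

lemma has_vector_derivative_cos_free_reflect:
  "((\<lambda>t. cos_free w (x - t)) has_vector_derivative (w * w) * sin_free w (x - t)) (at t within T)"
proof -
  have "((\<lambda>t. x - t) has_vector_derivative - 1) (at t within T)"
    by (auto intro!: derivative_eq_intros
        simp: has_real_derivative_iff_has_vector_derivative[symmetric])
  from vector_diff_chain_within[OF this has_vector_derivative_cos_free]
  show ?thesis by (simp add: o_def)
qed

lemma has_vector_derivative_sin_free_reflect:
  "((\<lambda>t. sin_free w (x - t)) has_vector_derivative - cos_free w (x - t)) (at t within T)"
proof -
  have "((\<lambda>t. x - t) has_vector_derivative - 1) (at t within T)"
    by (auto intro!: derivative_eq_intros
        simp: has_real_derivative_iff_has_vector_derivative[symmetric])
  from vector_diff_chain_within[OF this has_vector_derivative_sin_free]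
  show ?thesis by (simp add: o_def)
qed

lemma continuous_on_cos_free: "continuous_on T (cos_free w)"
  by (rule continuous_on_vector_derivative) (rule has_vector_derivative_cos_free)

lemma continuous_on_sin_free: "continuous_on T (sin_free w)"
  by (rule continuous_on_vector_derivative) (rule has_vector_derivative_sin_free)

lemma norm_cos_free_le: "norm (cos_free w s) \<le> exp (\<bar>Im w\<bar> * \<bar>s\<bar>)"
  using norm_cos_le_exp_abs_Im[of "w * of_real s"] by (simp add: cos_free_def abs_mult)

lemma norm_mult_sin_free_le: "norm (w * sin_free w s) \<le> exp (\<bar>Im w\<bar> * \<bar>s\<bar>)"
  using norm_sin_le_exp_abs_Im[of "w * of_real s"] by (simp add: sin_free_def abs_mult)

lemma norm_cos_free_le_exp_pi:
  assumes "0 \<le> s" "s \<le> pi"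
  shows "norm (cos_free w s) \<le> exp (pi * \<bar>Im w\<bar>)"
proof -
  have "norm (cos_free w s) \<le> exp (\<bar>Im w\<bar> * s)" using norm_cos_free_le[of w s] assms by simp
  also note exp_abs_Im_mult_le[OF assms]
  finally show ?thesis .
qed

lemma norm_mult_sin_free_le_exp_pi:
  assumes "0 \<le> s" "s \<le> pi"
  shows "norm (w * sin_free w s) \<le> exp (pi * \<bar>Im w\<bar>)"
proof -
  have "norm (w * sin_free w s) \<le> exp (\<bar>Im w\<bar> * s)" using norm_mult_sin_free_le[of w s] assms
    by simp
  also note exp_abs_Im_mult_le[OF assms]
  finally show ?thesis .
qed

lemma norm_sin_free_le:
  assumes "0 \<le> s"
  shows "norm (sin_free w s) \<le> s * exp (\<bar>Im w\<bar> * s)"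
proof -
  have "(cos_free w has_integral (sin_free w s - sin_free w 0)) {0..s}"
    by (rule fundamental_theorem_of_calculus[OF assms]) (rule has_vector_derivative_sin_free)
  then have "norm (sin_free w s - sin_free w 0)
      \<le> exp (\<bar>Im w\<bar> * s) * Henstock_Kurzweil_Integration.content (cbox 0 s)"
  proof (intro has_integral_bound[where f = "cos_free w"])
    fix x assume "x \<in> cbox 0 s"
    then have "exp (\<bar>Im w\<bar> * \<bar>x\<bar>) \<le> exp (\<bar>Im w\<bar> * s)" by (simp add: mult_left_mono)
    then show "norm (cos_free w x) \<le> exp (\<bar>Im w\<bar> * s)"
      using norm_cos_free_le[of w x] by linarith
  qed auto
  with assms show ?thesis by (simp add: mult.commute)
qed

lemma norm_sin_free_le_pi:
  assumes "0 \<le> s" "s \<le> pi"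
  shows "norm (sin_free w s) \<le> pi * exp (\<bar>Im w\<bar> * s)"
  by (rule order_trans[OF norm_sin_free_le[OF assms(1)] mult_right_mono[OF assms(2)]]) simp

section \<open>Gronwall's inequality\<close>

lemma gronwall_inequality:
  fixes \<phi> :: "real \<Rightarrow> real"
  assumes "0 \<le> b" and cont: "continuous_on {0..b} \<phi>" and L: "0 \<le> L"
    and le: "\<And>x. x \<in> {0..b} \<Longrightarrow> \<phi> x \<le> \<alpha> + L * integral {0..x} \<phi>"
    and x: "x \<in> {0..b}"
  shows "\<phi> x \<le> \<alpha> * exp (L * x)"
proof -
  define R where "R u = \<alpha> + L * integral {0..u} \<phi>" for u
  define W where "W u = exp (- L * u) * R u" for u
  have dR: "(R has_real_derivative L * \<phi> u) (at u within {0..b})" if "u \<in> {0..b}" for u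
  proof -
    have "((\<lambda>u. integral {0..u} \<phi>) has_real_derivative \<phi> u) (at u within {0..b})"
      using integral_has_vector_derivative[OF cont that]
      by (simp add: has_real_derivative_iff_has_vector_derivative)
    then show ?thesis unfolding R_def[abs_def] by (auto intro!: derivative_eq_intros)
  qed
  have dW: "(W has_real_derivative exp (- L * u) * (L * \<phi> u - L * R u)) (at u within {0..b})"
    if "u \<in> {0..b}" for u
    unfolding W_def[abs_def]
    by (rule derivative_eq_intros dR[OF that] refl)+ (simp add: algebra_simps)
  \<comment> \<open>\<open>W\<close> is non-increasing because \<open>\<phi> \<le> R\<close>.\<close>
  have "((\<lambda>u. exp (- L * u) * (L * \<phi> u - L * R u)) has_integral (W x - W 0)) {0..x}"
  proof (rule fundamental_theorem_of_calculus)
    show "0 \<le> x" using x by auto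
    fix u assume "u \<in> {0..x}"
    with x have "u \<in> {0..b}" by auto
    from dW[OF this] have "(W has_real_derivative exp (- L * u) * (L * \<phi> u - L * R u))
        (at u within {0..x})"
      by (rule DERIV_subset) (use x in auto)
    then show "(W has_vector_derivative exp (- L * u) * (L * \<phi> u - L * R u)) (at u within {0..x})"
      by (simp add: has_real_derivative_iff_has_vector_derivative)
  qed
  then have "W x - W 0 \<le> 0"
  proof (rule has_integral_le[where g = "\<lambda>_. 0"])
    fix u assume "u \<in> {0..x}"
    with x have "\<phi> u \<le> R u" using le R_def by auto
    with L show "exp (- L * u) * (L * \<phi> u - L * R u) \<le> 0"
      by (simp add: mult_nonneg_nonpos mult_left_mono)
  qed simp
  then have "R x \<le> \<alpha> * exp (L * x)"
    by (simp add: W_def R_def exp_minus field_simps)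
  moreover have "\<phi> x \<le> R x" using le[OF x] R_def by auto
  ultimately show ?thesis by linarith
qed

section \<open>Variation of constants\<close>

locale schroedinger_solution =
  fixes V :: "real \<Rightarrow> real" and z w :: complex and g g' :: "real \<Rightarrow> complex"
  assumes w_square: "w * w = z"
    and g_deriv: "\<And>t. t \<in> {0..pi} \<Longrightarrow> (g has_vector_derivative g' t) (at t within {0..pi})"
    and g'_deriv: "\<And>t. t \<in> {0..pi} \<Longrightarrow>
      (g' has_vector_derivative (of_real (V t) - z) * g t) (at t within {0..pi})"
begin

lemma continuous_on_g: "continuous_on {0..pi} g"
  using g_deriv by (rule continuous_on_vector_derivative)

lemma norm_w: "norm w = sqrt (norm z)"
proof -
  have "norm z = norm w * norm w" using w_square norm_mult by metis
  then show ?thesis by simp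
qed

lemma g_deriv_within:
  "x \<in> {0..pi} \<Longrightarrow> t \<in> {0..x} \<Longrightarrow> (g has_vector_derivative g' t) (at t within {0..x})"
  by (rule has_vector_derivative_within_subset[OF g_deriv]) auto

lemma g'_deriv_within:
  "x \<in> {0..pi} \<Longrightarrow> t \<in> {0..x} \<Longrightarrow>
    (g' has_vector_derivative (of_real (V t) - z) * g t) (at t within {0..x})"
  by (rule has_vector_derivative_within_subset[OF g'_deriv]) auto

lemma variation_of_constants:
  assumes x: "x \<in> {0..pi}"
  shows "((\<lambda>t. sin_free w (x - t) * (of_real (V t) * g t)) has_integral
           g x - (g 0 * cos_free w x + g' 0 * sin_free w x)) {0..x}"
proof -
  define h where "h t = sin_free w (x - t) * g' t + cos_free w (x - t) * g t" for t
  have "((\<lambda>t. sin_free w (x - t) * (of_real (V t) * g t)) has_integral h x - h 0) {0..x}"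
  proof (rule fundamental_theorem_of_calculus)
    show "0 \<le> x" using x by auto
    fix t assume t: "t \<in> {0..x}"
    have "(h has_vector_derivative
       sin_free w (x - t) * ((of_real (V t) - z) * g t) + - cos_free w (x - t) * g' t
        + (cos_free w (x - t) * g' t + ((w * w) * sin_free w (x - t)) * g t)) (at t within {0..x})"
      unfolding h_def[abs_def]
      by (intro has_vector_derivative_add has_vector_derivative_mult g_deriv_within[OF x t]
          g'_deriv_within[OF x t] has_vector_derivative_sin_free_reflect
          has_vector_derivative_cos_free_reflect)
    then show "(h has_vector_derivative sin_free w (x - t) * (of_real (V t) * g t))
        (at t within {0..x})"
      using w_square by (simp add: algebra_simps)
  qed
  then show ?thesis by (simp add: h_def algebra_simps)
qed

lemma variation_of_constants_deriv:
  assumes x: "x \<in> {0..pi}"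
  shows "((\<lambda>t. cos_free w (x - t) * (of_real (V t) * g t)) has_integral
           g' x - (g' 0 * cos_free w x - z * g 0 * sin_free w x)) {0..x}"
proof -
  define h where "h t = cos_free w (x - t) * g' t - z * sin_free w (x - t) * g t" for t
  have "((\<lambda>t. cos_free w (x - t) * (of_real (V t) * g t)) has_integral h x - h 0) {0..x}"
  proof (rule fundamental_theorem_of_calculus)
    show "0 \<le> x" using x by auto
    fix t assume t: "t \<in> {0..x}"
    have "(h has_vector_derivative
       cos_free w (x - t) * ((of_real (V t) - z) * g t) + ((w * w) * sin_free w (x - t)) * g' t
        - (z * sin_free w (x - t) * g' t + z * - cos_free w (x - t) * g t)) (at t within {0..x})"
      unfolding h_def[abs_def]
      by (intro has_vector_derivative_diff has_vector_derivative_add has_vector_derivative_mult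
          has_vector_derivative_mult_right g_deriv_within[OF x t] g'_deriv_within[OF x t]
          has_vector_derivative_sin_free_reflect has_vector_derivative_cos_free_reflect)
    then show "(h has_vector_derivative cos_free w (x - t) * (of_real (V t) * g t))
        (at t within {0..x})"
      using w_square by (simp add: algebra_simps)
  qed
  then show ?thesis by (simp add: h_def algebra_simps)
qed

lemma weighted_norm_le_integral:
  assumes V_bound: "\<And>t. t \<in> {0..pi} \<Longrightarrow> \<bar>V t\<bar> \<le> B" and y: "y \<in> {0..pi}"
  shows "norm (g y) * exp (- \<bar>Im w\<bar> * y)
    \<le> (norm (g 0) + pi * norm (g' 0))
      + pi * B * integral {0..y} (\<lambda>t. norm (g t) * exp (- \<bar>Im w\<bar> * t))"
proof -
  define \<tau> where "\<tau> = \<bar>Im w\<bar>"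
  define \<alpha> where "\<alpha> = norm (g 0) + pi * norm (g' 0)"
  define \<phi> where "\<phi> t = norm (g t) * exp (- \<tau> * t)" for t
  define I where "I = integral {0..y} (\<lambda>t. sin_free w (y - t) * (of_real (V t) * g t))"
  note volterra = variation_of_constants[OF y]
  have sub: "{0..y} \<subseteq> {0..pi}" using y by auto
  have g_y: "g y = g 0 * cos_free w y + g' 0 * sin_free w y + I"
    using integral_unique[OF volterra] I_def by simp
  have "norm (cos_free w y) \<le> exp (\<tau> * y)"
    using norm_cos_free_le[of w y] y by (simp add: \<tau>_def)
  moreover have "norm (sin_free w y) \<le> pi * exp (\<tau> * y)"
    using norm_sin_free_le_pi[of y w] y by (simp add: \<tau>_def)
  ultimately have "norm (g 0) * norm (cos_free w y) + norm (g' 0) * norm (sin_free w y)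
      \<le> norm (g 0) * exp (\<tau> * y) + norm (g' 0) * (pi * exp (\<tau> * y))"
    by (intro add_mono mult_left_mono) auto
  then have free_part: "norm (g 0 * cos_free w y + g' 0 * sin_free w y) \<le> \<alpha> * exp (\<tau> * y)"
    using norm_triangle_ineq[of "g 0 * cos_free w y" "g' 0 * sin_free w y"]
    by (simp add: \<alpha>_def norm_mult algebra_simps)
  have "norm I \<le> integral {0..y} (\<lambda>t. pi * B * exp (\<tau> * y) * \<phi> t)"
    unfolding I_def
  proof (rule integral_norm_bound_integral)
    show "(\<lambda>t. sin_free w (y - t) * (of_real (V t) * g t)) integrable_on {0..y}"
      using volterra by blast
    show "(\<lambda>t. pi * B * exp (\<tau> * y) * \<phi> t) integrable_on {0..y}"
      unfolding \<phi>_def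
      by (intro integrable_continuous_interval continuous_intros continuous_on_subset[OF _ sub]
          continuous_on_g)
    fix t assume t: "t \<in> {0..y}"
    with y have t': "t \<in> {0..pi}" by auto
    have "norm (sin_free w (y - t)) \<le> pi * exp (\<tau> * (y - t))"
      using norm_sin_free_le_pi[of "y - t" w] t y by (simp add: \<tau>_def)
    moreover have "norm (of_real (V t) * g t) \<le> B * (\<phi> t * exp (\<tau> * t))"
      using V_bound[OF t'] by (simp add: \<phi>_def norm_mult mult_right_mono exp_minus field_simps)
    ultimately have "norm (sin_free w (y - t) * (of_real (V t) * g t))
        \<le> pi * exp (\<tau> * (y - t)) * (B * (\<phi> t * exp (\<tau> * t)))"
      unfolding norm_mult[of "sin_free w (y - t)"] by (intro mult_mono) auto
    also have "\<dots> = pi * B * (exp (\<tau> * (y - t)) * exp (\<tau> * t)) * \<phi> t"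
      by (simp add: mult_ac)
    also have "\<dots> = pi * B * exp (\<tau> * y) * \<phi> t"
      by (simp add: algebra_simps flip: exp_add)
    finally show "norm (sin_free w (y - t) * (of_real (V t) * g t)) \<le> pi * B * exp (\<tau> * y) * \<phi> t" .
  qed
  then have "norm I \<le> pi * B * exp (\<tau> * y) * integral {0..y} \<phi>" by simp
  with free_part have "norm (g 0 * cos_free w y + g' 0 * sin_free w y) + norm I
      \<le> (\<alpha> + pi * B * integral {0..y} \<phi>) * exp (\<tau> * y)"
    by (simp add: algebra_simps)
  then have "norm (g y) \<le> (\<alpha> + pi * B * integral {0..y} \<phi>) * exp (\<tau> * y)"
    unfolding g_y by (meson norm_triangle_ineq order_trans)
  then have "norm (g y) * exp (- \<tau> * y) \<le> \<alpha> + pi * B * integral {0..y} \<phi>"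
    by (simp add: exp_minus divide_simps)
  then show ?thesis by (simp add: \<phi>_def[abs_def] \<tau>_def \<alpha>_def)
qed

lemma norm_le_gronwall:
  assumes V_bound: "\<And>t. t \<in> {0..pi} \<Longrightarrow> \<bar>V t\<bar> \<le> B" and x: "x \<in> {0..pi}"
  shows "norm (g x) \<le> (norm (g 0) + pi * norm (g' 0)) * exp (pi * pi * B) * exp (\<bar>Im w\<bar> * x)"
proof -
  define \<tau> where "\<tau> = \<bar>Im w\<bar>"
  define \<alpha> where "\<alpha> = norm (g 0) + pi * norm (g' 0)"
  define \<phi> where "\<phi> t = norm (g t) * exp (- \<tau> * t)" for t
  have B: "0 \<le> B" using V_bound[of 0] by auto
  have "\<phi> x \<le> \<alpha> * exp (pi * B * x)"
  proof (rule gronwall_inequality[OF pi_ge_zero _ _ _ x])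
    show "continuous_on {0..pi} \<phi>"
      unfolding \<phi>_def[abs_def] by (intro continuous_intros continuous_on_g)
    show "0 \<le> pi * B" using B by simp
    show "\<phi> y \<le> \<alpha> + pi * B * integral {0..y} \<phi>" if "y \<in> {0..pi}" for y
      using weighted_norm_le_integral[OF V_bound that] by (simp add: \<phi>_def[abs_def] \<tau>_def \<alpha>_def)
  qed
  also have "\<dots> \<le> \<alpha> * exp (pi * pi * B)"
  proof -
    have "pi * B * x \<le> pi * B * pi" using x B by (intro mult_left_mono) auto
    then show ?thesis by (intro mult_left_mono) (auto simp: \<alpha>_def mult_ac)
  qed
  finally have "\<phi> x \<le> \<alpha> * exp (pi * pi * B)" .
  have "norm (g x) = \<phi> x * exp (\<tau> * x)"
    by (simp add: \<phi>_def mult.assoc flip: exp_add)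
  also have "\<dots> \<le> \<alpha> * exp (pi * pi * B) * exp (\<tau> * x)"
    by (rule mult_right_mono[OF \<open>\<phi> x \<le> \<alpha> * exp (pi * pi * B)\<close>]) simp
  finally show ?thesis by (simp add: \<tau>_def \<alpha>_def)
qed

end

lemma schroedinger_solution_unique:
  assumes f: "schroedinger_solution V z w f f'" and g: "schroedinger_solution V z w g g'"
    and "f 0 = g 0" "f' 0 = g' 0"
    and V_bound: "\<And>t. t \<in> {0..pi} \<Longrightarrow> \<bar>V t\<bar> \<le> B" and x: "x \<in> {0..pi}"
  shows "f x = g x"
proof -
  interpret f: schroedinger_solution V z w f f' by (rule f)
  interpret g: schroedinger_solution V z w g g' by (rule g)
  interpret difference: schroedinger_solution V z w "\<lambda>t. f t - g t" "\<lambda>t. f' t - g' t"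
  proof
    fix t assume t: "t \<in> {0..pi}"
    show "((\<lambda>t. f t - g t) has_vector_derivative f' t - g' t) (at t within {0..pi})"
      by (intro has_vector_derivative_diff f.g_deriv g.g_deriv t)
    have "((\<lambda>t. f' t - g' t) has_vector_derivative
        (of_real (V t) - z) * f t - (of_real (V t) - z) * g t) (at t within {0..pi})"
      by (intro has_vector_derivative_diff f.g'_deriv g.g'_deriv t)
    then show "((\<lambda>t. f' t - g' t) has_vector_derivative (of_real (V t) - z) * (f t - g t))
        (at t within {0..pi})"
      by (simp add: algebra_simps)
  qed (rule f.w_square)
  have "norm (f x - g x) \<le> 0"
    using difference.norm_le_gronwall[OF V_bound x] assms(3,4) by simp
  then show ?thesis by simp
qed

section \<open>Existence by Picard iteration\<close>

lemma has_vector_derivative_suminf: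
  fixes f f' :: "nat \<Rightarrow> real \<Rightarrow> complex"
  assumes "a \<le> b"
    and f_deriv: "\<And>n x. x \<in> {a..b} \<Longrightarrow> (f n has_vector_derivative f' n x) (at x within {a..b})"
    and f'_bound: "\<And>n x. x \<in> {a..b} \<Longrightarrow> norm (f' n x) \<le> M n" and "summable M"
    and "summable (\<lambda>n. f n a)"
    and x: "x \<in> {a..b}"
  shows "((\<lambda>x. \<Sum>n. f n x) has_vector_derivative (\<Sum>n. f' n x)) (at x within {a..b})"
proof -
  have unif: "uniform_limit {a..b} (\<lambda>n x. \<Sum>i<n. f' i x) (\<lambda>x. \<Sum>i. f' i x) sequentially"
    by (rule Weierstrass_m_test[OF f'_bound \<open>summable M\<close>])
  have "\<exists>g. \<forall>x\<in>{a..b}. (\<lambda>n. f n x) sums g x \<and>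
      (g has_derivative (\<lambda>h. h *\<^sub>R (\<Sum>i. f' i x))) (at x within {a..b})"
  proof (rule has_derivative_series[where f' = "\<lambda>n x h. h *\<^sub>R f' n x"])
    show "\<And>n x. x \<in> {a..b} \<Longrightarrow> (f n has_derivative (\<lambda>h. h *\<^sub>R f' n x)) (at x within {a..b})"
      using f_deriv by (simp add: has_vector_derivative_def)
    show "(\<lambda>n. f n a) sums (\<Sum>n. f n a)"
      using \<open>summable (\<lambda>n. f n a)\<close> by (simp add: summable_sums)
    fix e :: real assume "0 < e"
    show "\<forall>\<^sub>F n in sequentially. \<forall>x\<in>{a..b}. \<forall>h.
        norm ((\<Sum>i<n. h *\<^sub>R f' i x) - h *\<^sub>R (\<Sum>i. f' i x)) \<le> e * norm h"
      using uniform_limitD[OF unif \<open>0 < e\<close>]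
    proof eventually_elim
      case (elim n)
      show ?case
      proof (intro ballI allI)
        fix x h assume "x \<in> {a..b}"
        have "norm ((\<Sum>i<n. h *\<^sub>R f' i x) - h *\<^sub>R (\<Sum>i. f' i x))
            = \<bar>h\<bar> * dist (\<Sum>i<n. f' i x) (\<Sum>i. f' i x)"
          by (simp add: scaleR_sum_right[symmetric] scaleR_diff_right[symmetric] dist_norm)
        also have "\<dots> \<le> \<bar>h\<bar> * e"
          using elim \<open>x \<in> {a..b}\<close> by (intro mult_left_mono) (auto intro: less_imp_le)
        finally show "norm ((\<Sum>i<n. h *\<^sub>R f' i x) - h *\<^sub>R (\<Sum>i. f' i x)) \<le> e * norm h"
          by (simp add: mult.commute)
      qed
    qed
  qed (use \<open>a \<le> b\<close> in auto)
  then obtain g where g: "\<And>x. x \<in> {a..b} \<Longrightarrow> (\<lambda>n. f n x) sums g x"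
    "\<And>x. x \<in> {a..b} \<Longrightarrow> (g has_derivative (\<lambda>h. h *\<^sub>R (\<Sum>i. f' i x))) (at x within {a..b})"
    by blast
  have "(g has_vector_derivative (\<Sum>n. f' n x)) (at x within {a..b})"
    using g(2)[OF x] by (simp add: has_vector_derivative_def)
  moreover have "\<And>y. y \<in> {a..b} \<Longrightarrow> (\<Sum>n. f n y) = g y"
    using g(1) sums_unique by metis
  ultimately show ?thesis
    by (rule has_vector_derivative_transform[OF x, rotated])
qed

lemma has_integral_scaled_power:
  fixes x M :: real
  assumes "0 \<le> x"
  shows "((\<lambda>t. M * (M * t) ^ k / fact k) has_integral (M * x) ^ Suc k / fact (Suc k)) {0..x}"
proof -
  have "((\<lambda>t. M * (M * t) ^ k / fact k) has_integral
      (M * x) ^ Suc k / fact (Suc k) - (M * 0) ^ Suc k / fact (Suc k)) {0..x}"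
  proof (rule fundamental_theorem_of_calculus[OF assms])
    fix t
    have "((\<lambda>t. (M * t) ^ Suc k / fact (Suc k)) has_real_derivative
        of_nat (Suc k) * (M * t) ^ k * M / fact (Suc k)) (at t within {0..x})"
      by (auto intro!: derivative_eq_intros simp del: fact_Suc power_Suc of_nat_Suc)
    moreover have "of_nat (Suc k) * (M * t) ^ k * M / fact (Suc k) = M * (M * t) ^ k / fact k"
      by (simp add: fact_Suc field_simps del: of_nat_Suc)
    ultimately have "((\<lambda>t. (M * t) ^ Suc k / fact (Suc k)) has_real_derivative
        M * (M * t) ^ k / fact k) (at t within {0..x})"
      by metis
    then show "((\<lambda>t. (M * t) ^ Suc k / fact (Suc k)) has_vector_derivative
        M * (M * t) ^ k / fact k) (at t within {0..x})"
      by (simp only: has_real_derivative_iff_has_vector_derivative)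
  qed
  then show ?thesis by simp
qed

lemma continuous_on_indefinite_integral:
  fixes f :: "real \<Rightarrow> complex"
  assumes "continuous_on {a..b} f"
  shows "continuous_on {a..b} (\<lambda>x. integral {a..x} f)"
  by (rule continuous_on_vector_derivative) (rule integral_has_vector_derivative[OF assms])

text \<open>Picard iterates for the first-order system \<open>(y, y')' = (y', (V - z) y)\<close> with data \<open>(1, 0)\<close>;
  the solution is the sum of all iterates.\<close>
primrec picard_iterate :: "(real \<Rightarrow> real) \<Rightarrow> complex \<Rightarrow> nat \<Rightarrow> real \<Rightarrow> complex \<times> complex" where
  "picard_iterate V z 0 = (\<lambda>x. (1, 0))"
| "picard_iterate V z (Suc k) = (\<lambda>x. (integral {0..x} (\<lambda>t. snd (picard_iterate V z k t)),
     integral {0..x} (\<lambda>t. (of_real (V t) - z) * fst (picard_iterate V z k t))))"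

locale picard =
  fixes V :: "real \<Rightarrow> real" and z :: complex and M :: real
  assumes V_cont: "continuous_on {0..pi} V"
    and M_ge_1: "1 \<le> M"
    and M_bound: "\<And>t. t \<in> {0..pi} \<Longrightarrow> norm (of_real (V t) - z) \<le> M"
begin

abbreviation P where "P k x \<equiv> fst (picard_iterate V z k x)"
abbreviation Q where "Q k x \<equiv> snd (picard_iterate V z k x)"

lemma picard_iterate_continuous_bounded:
  "continuous_on {0..pi} (P k) \<and> continuous_on {0..pi} (Q k) \<and>
   (\<forall>x\<in>{0..pi}. norm (P k x) \<le> (M * x) ^ k / fact k \<and> norm (Q k x) \<le> (M * x) ^ k / fact k)"
proof (induction k)
  case 0
  then show ?case by simp
next
  case (Suc k)
  then have P_cont: "continuous_on {0..pi} (P k)" and Q_cont: "continuous_on {0..pi} (Q k)"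
    and bound: "\<And>x. x \<in> {0..pi} \<Longrightarrow>
      norm (P k x) \<le> (M * x) ^ k / fact k \<and> norm (Q k x) \<le> (M * x) ^ k / fact k"
    by auto
  have VP_cont: "continuous_on {0..pi} (\<lambda>t. (of_real (V t) - z) * P k t)"
    by (intro continuous_intros P_cont continuous_on_of_real V_cont)
  have integral_bound: "norm (integral {0..x} h) \<le> (M * x) ^ Suc k / fact (Suc k)"
    if x: "x \<in> {0..pi}" and "continuous_on {0..pi} h"
      and h_bound: "\<And>t. t \<in> {0..x} \<Longrightarrow> norm (h t) \<le> M * (M * t) ^ k / fact k"
    for h :: "real \<Rightarrow> complex" and x
  proof -
    have "continuous_on {0..x} h"
      by (rule continuous_on_subset[OF \<open>continuous_on {0..pi} h\<close>]) (use x in auto)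
    then have "norm (integral {0..x} h) \<le> integral {0..x} (\<lambda>t. M * (M * t) ^ k / fact k)"
      by (rule integral_norm_bound_integral[OF integrable_continuous_interval])
        (use has_integral_scaled_power[of x M k] x h_bound in auto)
    also have "\<dots> = (M * x) ^ Suc k / fact (Suc k)"
      by (rule integral_unique[OF has_integral_scaled_power]) (use x in auto)
    finally show ?thesis .
  qed
  show ?case
  proof (intro conjI ballI)
    show "continuous_on {0..pi} (P (Suc k))" "continuous_on {0..pi} (Q (Suc k))"
      using continuous_on_indefinite_integral[OF Q_cont]
        continuous_on_indefinite_integral[OF VP_cont] by simp_all
    fix x assume x: "x \<in> {0..pi}"
    have "norm (Q k t) \<le> M * (M * t) ^ k / fact k" if "t \<in> {0..x}" for t
    proof -
      from that x have "norm (Q k t) \<le> (M * t) ^ k / fact k" using bound by auto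
      also have "\<dots> \<le> M * ((M * t) ^ k / fact k)"
        using M_ge_1 that mult_right_mono[of 1 M "(M * t) ^ k / fact k"] by simp
      finally show ?thesis by simp
    qed
    then show "norm (P (Suc k) x) \<le> (M * x) ^ Suc k / fact (Suc k)"
      using integral_bound[OF x Q_cont] by simp
    have "norm ((of_real (V t) - z) * P k t) \<le> M * (M * t) ^ k / fact k" if "t \<in> {0..x}" for t
    proof -
      from that x have "t \<in> {0..pi}" by auto
      then have "norm ((of_real (V t) - z) * P k t) \<le> M * ((M * t) ^ k / fact k)"
        unfolding norm_mult using M_bound bound M_ge_1 by (intro mult_mono) auto
      then show ?thesis by simp
    qed
    then show "norm (Q (Suc k) x) \<le> (M * x) ^ Suc k / fact (Suc k)"
      using integral_bound[OF x VP_cont] by simp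
  qed
qed

lemma picard_iterate_continuous: "continuous_on {0..pi} (P k)" "continuous_on {0..pi} (Q k)"
  using picard_iterate_continuous_bounded by auto

lemma picard_iterate_bound:
  assumes "x \<in> {0..pi}"
  shows "norm (P k x) \<le> (M * pi) ^ k / fact k" "norm (Q k x) \<le> (M * pi) ^ k / fact k"
proof -
  have "(M * x) ^ k / fact k \<le> (M * pi) ^ k / fact k"
    using assms M_ge_1 by (intro divide_right_mono power_mono mult_left_mono) auto
  then show "norm (P k x) \<le> (M * pi) ^ k / fact k" "norm (Q k x) \<le> (M * pi) ^ k / fact k"
    using picard_iterate_continuous_bounded[of k] assms by (meson order_trans)+
qed

lemma summable_exp_bound: "summable (\<lambda>k. (M * pi) ^ k / fact k)"
  using summable_exp[of "M * pi"] by (simp add: field_simps)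

lemma summable_shifted_exp_bound: "summable (\<lambda>k. case k of 0 \<Rightarrow> 0 | Suc j \<Rightarrow> (M * pi) ^ j / fact j)"
  using summable_exp_bound by (subst summable_Suc_iff[symmetric]) simp

lemma summable_P: "x \<in> {0..pi} \<Longrightarrow> summable (\<lambda>k. P k x)"
  by (rule summable_comparison_test[OF _ summable_exp_bound]) (use picard_iterate_bound in auto)

lemma summable_Q: "x \<in> {0..pi} \<Longrightarrow> summable (\<lambda>k. Q k x)"
  by (rule summable_comparison_test[OF _ summable_exp_bound]) (use picard_iterate_bound in auto)

lemma suminf_shift_zero:
  fixes f :: "nat \<Rightarrow> complex"
  assumes "summable f"
  shows "(\<Sum>n. case n of 0 \<Rightarrow> 0 | Suc k \<Rightarrow> f k) = (\<Sum>n. f n)"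
proof -
  have "(\<lambda>n. case n of 0 \<Rightarrow> 0 | Suc k \<Rightarrow> f k) sums (\<Sum>n. f n)"
    using sums_Suc_iff[of "\<lambda>n. case n of 0 \<Rightarrow> 0 | Suc k \<Rightarrow> f k"] summable_sums[OF assms]
    by simp
  then show ?thesis by (simp add: sums_iff)
qed

lemma picard_sum_deriv:
  assumes x: "x \<in> {0..pi}"
  shows "((\<lambda>x. \<Sum>k. P k x) has_vector_derivative (\<Sum>k. Q k x)) (at x within {0..pi})"
proof -
  have "((\<lambda>x. \<Sum>k. P k x) has_vector_derivative
      (\<Sum>n. case n of 0 \<Rightarrow> 0 | Suc k \<Rightarrow> Q k x)) (at x within {0..pi})"
  proof (rule has_vector_derivative_suminf[OF pi_ge_zero _ _ summable_shifted_exp_bound])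
    fix n y assume y: "y \<in> {0..pi}"
    show "(P n has_vector_derivative (case n of 0 \<Rightarrow> 0 | Suc k \<Rightarrow> Q k y)) (at y within {0..pi})"
      using integral_has_vector_derivative[OF picard_iterate_continuous(2) y]
      by (cases n) simp_all
    show "norm (case n of 0 \<Rightarrow> 0 | Suc k \<Rightarrow> Q k y)
        \<le> (case n of 0 \<Rightarrow> 0 | Suc j \<Rightarrow> (M * pi) ^ j / fact j)"
      using picard_iterate_bound[OF y] by (cases n) auto
  qed (use summable_P x in auto)
  then show ?thesis using suminf_shift_zero[OF summable_Q[OF x]] by simp
qed

lemma picard_sum_deriv':
  assumes x: "x \<in> {0..pi}"
  shows "((\<lambda>x. \<Sum>k. Q k x) has_vector_derivative (of_real (V x) - z) * (\<Sum>k. P k x))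
    (at x within {0..pi})"
proof -
  define f' where "f' n x = (case n of 0 \<Rightarrow> 0 | Suc k \<Rightarrow> (of_real (V x) - z) * P k x)" for n x
  have "((\<lambda>x. \<Sum>k. Q k x) has_vector_derivative (\<Sum>n. f' n x)) (at x within {0..pi})"
  proof (rule has_vector_derivative_suminf
      [where M = "\<lambda>n. M * (case n of 0 \<Rightarrow> 0 | Suc j \<Rightarrow> (M * pi) ^ j / fact j)"])
    fix n y assume y: "y \<in> {0..pi}"
    have VP_cont: "continuous_on {0..pi} (\<lambda>t. (of_real (V t) - z) * P k t)" for k
      by (intro continuous_intros picard_iterate_continuous continuous_on_of_real V_cont)
    show "(Q n has_vector_derivative f' n y) (at y within {0..pi})"
      using integral_has_vector_derivative[OF VP_cont y] by (cases n) (simp_all add: f'_def)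
    show "norm (f' n y) \<le> M * (case n of 0 \<Rightarrow> 0 | Suc j \<Rightarrow> (M * pi) ^ j / fact j)"
    proof (cases n)
      case (Suc k)
      have "norm (of_real (V y) - z) * norm (P k y) \<le> M * ((M * pi) ^ k / fact k)"
        using M_bound[OF y] picard_iterate_bound(1)[OF y] M_ge_1 by (intro mult_mono) auto
      with Suc show ?thesis by (simp add: f'_def norm_mult)
    qed (simp add: f'_def)
  qed (use summable_shifted_exp_bound summable_Q x in \<open>auto intro: summable_mult\<close>)
  moreover have "(\<Sum>n. f' n x) = (of_real (V x) - z) * (\<Sum>k. P k x)"
    using suminf_shift_zero[OF summable_mult[OF summable_P[OF x]], of "of_real (V x) - z"]
    by (simp add: f'_def suminf_mult[OF summable_P[OF x]])
  ultimately show ?thesis by simp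
qed

lemma picard_sum_0: "(\<Sum>k. P k 0) = 1" "(\<Sum>k. Q k 0) = 0"
  using suminf_split_head[OF summable_P[of 0]] suminf_split_head[OF summable_Q[of 0]] by simp_all

end

lemma continuous_on_imp_abs_bounded:
  fixes V :: "real \<Rightarrow> real"
  assumes "continuous_on {0..pi} V"
  obtains B where "0 \<le> B" "\<And>t. t \<in> {0..pi} \<Longrightarrow> \<bar>V t\<bar> \<le> B"
proof -
  have "bounded (V ` {0..pi})"
    by (rule compact_imp_bounded[OF compact_continuous_image[OF assms compact_Icc]])
  then obtain B where "\<forall>t\<in>{0..pi}. \<bar>V t\<bar> \<le> B"
    by (auto simp: bounded_iff)
  then have B: "\<And>t. t \<in> {0..pi} \<Longrightarrow> \<bar>V t\<bar> \<le> B" by blast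
  moreover from B[of 0] have "0 \<le> B" by auto
  ultimately show ?thesis using that by blast
qed

lemma xi_is_solution:
  assumes V_cont: "continuous_on {0..pi} V" and w_square: "w * w = z"
  obtains q where "schroedinger_solution V z w (\<lambda>x. xi V x z) q" "xi V 0 z = 1" "q 0 = 0"
proof -
  obtain B where B: "0 \<le> B" "\<And>t. t \<in> {0..pi} \<Longrightarrow> \<bar>V t\<bar> \<le> B"
    using continuous_on_imp_abs_bounded[OF V_cont] by blast
  interpret picard V z "max 1 (B + norm z)"
  proof
    fix t assume t: "t \<in> {0..pi}"
    have "norm (of_real (V t) - z) \<le> norm (of_real (V t) :: complex) + norm z"
      by (rule norm_triangle_ineq4)
    also have "\<dots> \<le> B + norm z" using B(2)[OF t] by simp
    finally show "norm (of_real (V t) - z) \<le> max 1 (B + norm z)" by simp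
  qed (use V_cont in auto)
  define y where "y x = (if x \<in> {0..pi} then \<Sum>k. P k x else 0)" for x
  define y' where "y' x = (\<Sum>k. Q k x)" for x
  have y_deriv: "(y has_vector_derivative y' t) (at t within {0..pi})" if "t \<in> {0..pi}" for t
    unfolding y'_def
    by (rule has_vector_derivative_transform[OF that _ picard_sum_deriv[OF that]]) (simp add: y_def)
  have y'_deriv: "(y' has_vector_derivative (of_real (V t) - z) * y t) (at t within {0..pi})"
    if "t \<in> {0..pi}" for t
    using picard_sum_deriv'[OF that] that by (simp add: y_def y'_def[abs_def])
  have y_sol: "schroedinger_solution V z w y y'"
    using w_square y_deriv y'_deriv by unfold_locales
  have y_0: "y 0 = 1" "y' 0 = 0" using picard_sum_0 by (simp_all add: y_def y'_def)
  define is_xi where "is_xi f \<longleftrightarrow> f 0 = 1 \<and>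
      (\<exists>f'. f' 0 = 0 \<and>
         (\<forall>t\<in>{0..pi}. (f has_vector_derivative f' t) (at t within {0..pi}) \<and>
           (f' has_vector_derivative (complex_of_real (V t) - z) * f t) (at t within {0..pi}))) \<and>
      (\<forall>t. t \<notin> {0..pi} \<longrightarrow> f t = 0)" for f :: "real \<Rightarrow> complex"
  have y_is_xi: "is_xi y"
    unfolding is_xi_def using y_deriv y'_deriv y_0 by (auto simp: y_def intro!: exI[of _ y'])
  have unique: "f = y" if "is_xi f" for f
  proof
    fix x
    from that obtain f' where f_0: "f 0 = 1" "f' 0 = 0"
      and f_deriv: "\<forall>t\<in>{0..pi}. (f has_vector_derivative f' t) (at t within {0..pi}) \<and>
           (f' has_vector_derivative (complex_of_real (V t) - z) * f t) (at t within {0..pi})"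
      and f_outside: "\<forall>t. t \<notin> {0..pi} \<longrightarrow> f t = 0"
      unfolding is_xi_def by blast
    have f_sol: "schroedinger_solution V z w f f'"
      unfolding schroedinger_solution_def using w_square f_deriv by blast
    show "f x = y x"
    proof (cases "x \<in> {0..pi}")
      case True
      then show ?thesis using schroedinger_solution_unique[OF f_sol y_sol _ _ B(2)] f_0 y_0 by simp
    next
      case False
      have "y x = 0" unfolding y_def using False by (rule if_not_P)
      moreover have "f x = 0" using f_outside False by simp
      ultimately show ?thesis by simp
    qed
  qed
  have xi_eq: "xi V x z = y x" for x
    using the_equality[of is_xi y, OF y_is_xi unique] unfolding xi_def is_xi_def by simp
  then have "(\<lambda>x. xi V x z) = y" by (rule ext)
  then show ?thesis by (intro that[of y']) (simp_all add: xi_eq y_sol y_0)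
qed

section \<open>Integration by parts against \<open>sin (n x)\<close> and \<open>cos (n x)\<close>\<close>

lemma has_vector_derivative_of_real_sin:
  "((\<lambda>x. complex_of_real (sin (real n * x))) has_vector_derivative
     complex_of_real (real n * cos (real n * x))) (at x within S)"
  by (auto intro!: derivative_eq_intros)

lemma has_vector_derivative_of_real_cos:
  "((\<lambda>x. complex_of_real (cos (real n * x))) has_vector_derivative
     complex_of_real (- real n * sin (real n * x))) (at x within S)"
  by (auto intro!: derivative_eq_intros)

lemma integral_mult_sin_by_parts:
  fixes f f' :: "real \<Rightarrow> complex"
  assumes b: "0 \<le> b" and n: "1 \<le> n"
    and f_deriv: "\<And>x. x \<in> {0..b} \<Longrightarrow> (f has_vector_derivative f' x) (at x within {0..b})"
    and f'_cont: "continuous_on {0..b} f'"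
  shows "integral {0..b} (\<lambda>x. f x * complex_of_real (sin (real n * x)))
    = ((f 0 - f b * complex_of_real (cos (real n * b)))
       + integral {0..b} (\<lambda>x. f' x * complex_of_real (cos (real n * x)))) / of_real (real n)"
proof -
  have n0: "real n > 0" using n by simp
  define c where "c x = complex_of_real (cos (real n * x)) / of_real (real n)" for x
  define G' where "G' x = - f x * (complex_of_real (- real n * sin (real n * x)) / of_real (real n))
    + - f' x * c x" for x
  have G': "(G' has_integral (- f b * c b) - (- f 0 * c 0)) {0..b}"
  proof (rule fundamental_theorem_of_calculus[OF b])
    fix x assume "x \<in> {0..b}"
    then show "((\<lambda>x. - f x * c x) has_vector_derivative G' x) (at x within {0..b})"
      unfolding G'_def c_def
      by (intro has_vector_derivative_divide has_vector_derivative_minus has_vector_derivative_mult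
          f_deriv has_vector_derivative_of_real_cos)
  qed
  have "((\<lambda>x. f' x * c x) has_integral integral {0..b} (\<lambda>x. f' x * c x)) {0..b}"
    unfolding c_def
    by (intro integrable_integral integrable_continuous_interval continuous_intros f'_cont)
      (use n in auto)
  from has_integral_add[OF G' this]
  have "((\<lambda>x. G' x + f' x * c x) has_integral
      f 0 * c 0 - f b * c b + integral {0..b} (\<lambda>x. f' x * c x)) {0..b}"
    by simp
  moreover have "G' x + f' x * c x = f x * complex_of_real (sin (real n * x))" for x
  proof -
    have "complex_of_real (- real n * sin (real n * x)) / of_real (real n)
        = - complex_of_real (sin (real n * x))"
      using n0 by simp
    then show ?thesis unfolding G'_def by (simp only:) (simp add: algebra_simps)
  qed
  ultimately have "integral {0..b} (\<lambda>x. f x * complex_of_real (sin (real n * x)))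
      = f 0 * c 0 - f b * c b + integral {0..b} (\<lambda>x. f' x * c x)"
    by (simp add: integral_unique)
  then show ?thesis by (simp add: c_def add_divide_distrib diff_divide_distrib)
qed

lemma norm_integral_mult_sin_le:
  fixes f f' :: "real \<Rightarrow> complex"
  assumes b: "0 \<le> b" and n: "1 \<le> n"
    and f_deriv: "\<And>x. x \<in> {0..b} \<Longrightarrow> (f has_vector_derivative f' x) (at x within {0..b})"
    and f'_cont: "continuous_on {0..b} f'"
    and f_bound: "\<And>x. x \<in> {0..b} \<Longrightarrow> norm (f x) \<le> A"
    and f'_bound: "\<And>x. x \<in> {0..b} \<Longrightarrow> norm (f' x) \<le> A'"
  shows "norm (integral {0..b} (\<lambda>x. f x * complex_of_real (sin (real n * x))))
    \<le> (2 * A + b * A') / real n"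
proof -
  have A': "0 \<le> A'" using b by (intro order_trans[OF norm_ge_zero f'_bound[of 0]]) auto
  have "norm (f b * complex_of_real (cos (real n * b))) \<le> A"
    using f_bound[of b] b mult_left_le[OF abs_cos_le_one[of "real n * b"] norm_ge_zero[of "f b"]]
    by (simp add: norm_mult)
  then have boundary: "norm (f 0 - f b * complex_of_real (cos (real n * b))) \<le> 2 * A"
    using f_bound[of 0] b norm_triangle_ineq4[of "f 0" "f b * complex_of_real (cos (real n * b))"]
    by simp
  have "norm (integral {0..b} (\<lambda>x. f' x * complex_of_real (cos (real n * x))))
      \<le> A' * Henstock_Kurzweil_Integration.content (cbox 0 b)"
  proof (rule has_integral_bound[OF A'])
    show "((\<lambda>x. f' x * complex_of_real (cos (real n * x))) has_integral
        integral {0..b} (\<lambda>x. f' x * complex_of_real (cos (real n * x)))) (cbox 0 b)"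
      unfolding box_real
      by (intro integrable_integral integrable_continuous_interval continuous_intros f'_cont)
    fix x assume "x \<in> cbox 0 b"
    then show "norm (f' x * complex_of_real (cos (real n * x))) \<le> A'"
      using f'_bound[of x] mult_left_le[OF abs_cos_le_one[of "real n * x"] norm_ge_zero[of "f' x"]]
      by (simp add: norm_mult)
  qed
  with b have "norm (integral {0..b} (\<lambda>x. f' x * complex_of_real (cos (real n * x)))) \<le> b * A'"
    by (simp add: mult.commute)
  with boundary have "norm ((f 0 - f b * complex_of_real (cos (real n * b)))
      + integral {0..b} (\<lambda>x. f' x * complex_of_real (cos (real n * x)))) \<le> 2 * A + b * A'"
    by (meson add_mono norm_triangle_ineq order_trans)
  moreover have "integral {0..b} (\<lambda>x. f x * complex_of_real (sin (real n * x)))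
    = ((f 0 - f b * complex_of_real (cos (real n * b)))
       + integral {0..b} (\<lambda>x. f' x * complex_of_real (cos (real n * x)))) / of_real (real n)"
    by (rule integral_mult_sin_by_parts[OF b n f_deriv f'_cont])
  ultimately show ?thesis
    using n by (simp add: norm_divide divide_right_mono)
qed

lemma integral_mult_cos_by_parts:
  fixes f f' :: "real \<Rightarrow> complex"
  assumes n: "1 \<le> n"
    and f_deriv: "\<And>x. x \<in> {0..pi} \<Longrightarrow> (f has_vector_derivative f' x) (at x within {0..pi})"
    and f'_cont: "continuous_on {0..pi} f'"
  shows "integral {0..pi} (\<lambda>x. f x * complex_of_real (cos (real n * x))) =
    - integral {0..pi} (\<lambda>x. f' x * complex_of_real (sin (real n * x))) / of_real (real n)"
proof -
  have n0: "real n > 0" using n by simp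
  define s where "s x = complex_of_real (sin (real n * x)) / of_real (real n)" for x
  define H where "H x = f x * s x" for x
  define H' where "H' x = f x * (complex_of_real (real n * cos (real n * x)) / of_real (real n))
    + f' x * s x" for x
  have "(H' has_integral H pi - H 0) {0..pi}"
  proof (rule fundamental_theorem_of_calculus)
    fix x assume "x \<in> {0..pi}"
    then show "(H has_vector_derivative H' x) (at x within {0..pi})"
      unfolding H_def[abs_def] H'_def s_def
      by (intro has_vector_derivative_divide has_vector_derivative_mult f_deriv
          has_vector_derivative_of_real_sin)
  qed simp
  moreover have "H pi = 0" "H 0 = 0" by (simp_all add: H_def s_def sin_npi)
  ultimately have H': "(H' has_integral 0) {0..pi}" by simp
  have "((\<lambda>x. f' x * s x) has_integral integral {0..pi} (\<lambda>x. f' x * s x)) {0..pi}"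
    unfolding s_def
    by (intro integrable_integral integrable_continuous_interval continuous_intros f'_cont)
      (use n in auto)
  from has_integral_diff[OF H' this]
  have "((\<lambda>x. H' x - f' x * s x) has_integral - integral {0..pi} (\<lambda>x. f' x * s x)) {0..pi}"
    by simp
  moreover have "H' x - f' x * s x = f x * complex_of_real (cos (real n * x))" for x
  proof -
    have "complex_of_real (real n * cos (real n * x)) / of_real (real n)
        = complex_of_real (cos (real n * x))"
      using n0 by simp
    then show ?thesis unfolding H'_def by (simp only:) (simp add: algebra_simps)
  qed
  ultimately have "integral {0..pi} (\<lambda>x. f x * complex_of_real (cos (real n * x)))
      = - integral {0..pi} (\<lambda>x. f' x * s x)"
    by (simp add: integral_unique)
  also have "\<dots>
      = - integral {0..pi} (\<lambda>x. f' x * complex_of_real (sin (real n * x))) / of_real (real n)"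
    by (simp add: s_def)
  finally show ?thesis .
qed

section \<open>The potential and \<open>\<rho>\<close>\<close>

lemma absolutely_continuous_on_imp_continuous_on:
  assumes "absolutely_continuous_on {0..pi} V"
  shows "continuous_on {0..pi} V"
  unfolding continuous_on_iff
proof (intro ballI allI impI)
  fix x e :: real assume x: "x \<in> {0..pi}" and "0 < e"
  then obtain d where "d > 0" and small: "\<And>I :: (real \<times> real) set.
        finite I \<and> (\<forall>(a,b)\<in>I. a \<le> b \<and> {a..b} \<subseteq> {0..pi}) \<and>
        pairwise (\<lambda>(a,b) (c,d). {a<..<b} \<inter> {c<..<d} = {}) I \<and>
        (\<Sum>(a,b)\<in>I. b - a) < d
        \<Longrightarrow> (\<Sum>(a,b)\<in>I. \<bar>V b - V a\<bar>) < e"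
    using assms unfolding absolutely_continuous_on_def by meson
  show "\<exists>d>0. \<forall>x'\<in>{0..pi}. dist x' x < d \<longrightarrow> dist (V x') (V x) < e"
  proof (intro exI[of _ d] conjI ballI impI \<open>d > 0\<close>)
    fix x' assume x': "x' \<in> {0..pi}" and "dist x' x < d"
    have "(\<Sum>(a,b)\<in>{(min x x', max x x')}. \<bar>V b - V a\<bar>) < e"
      by (rule small) (use x x' \<open>dist x' x < d\<close> in \<open>auto simp: dist_real_def\<close>)
    then show "dist (V x') (V x) < e"
      by (cases "x \<le> x'") (auto simp: dist_real_def min_def max_def abs_minus_commute)
  qed
qed

definition rho_deriv :: "(real \<Rightarrow> real) \<Rightarrow> real \<Rightarrow> real" where
  "rho_deriv V x = V x / 2 - integral {0..pi} V / (2 * pi)"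

locale bounded_potential =
  fixes V :: "real \<Rightarrow> real" and B :: real
  assumes V_cont: "continuous_on {0..pi} V"
    and V_bound: "\<And>t. t \<in> {0..pi} \<Longrightarrow> \<bar>V t\<bar> \<le> B"
begin

lemma B_nonneg: "0 \<le> B"
  using V_bound[of 0] by auto

lemma abs_integral_V_le:
  assumes "x \<in> {0..pi}"
  shows "\<bar>integral {0..x} V\<bar> \<le> B * x"
proof -
  have "(V has_integral integral {0..x} V) (cbox 0 x)"
    using assms
    by (auto intro!: integrable_integral integrable_continuous_interval
        continuous_on_subset[OF V_cont])
  from has_integral_bound[OF B_nonneg this] assms V_bound show ?thesis by auto
qed

lemma rho_has_vector_derivative:
  assumes "x \<in> {0..pi}"
  shows "((\<lambda>x. of_real (rho V x)) has_vector_derivative of_real (rho_deriv V x))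
    (at x within {0..pi})"
proof -
  have "((\<lambda>u. integral {0..u} V) has_real_derivative V x) (at x within {0..pi})"
    using integral_has_vector_derivative[OF V_cont assms]
    by (simp add: has_real_derivative_iff_has_vector_derivative)
  then have "((\<lambda>x. rho V x) has_real_derivative rho_deriv V x) (at x within {0..pi})"
    unfolding rho_def rho_deriv_def by (auto intro!: derivative_eq_intros)
  then show ?thesis by (rule has_vector_derivative_of_real)
qed

lemma continuous_on_rho: "continuous_on {0..pi} (\<lambda>x. complex_of_real (rho V x))"
  by (rule continuous_on_vector_derivative) (rule rho_has_vector_derivative)

lemma continuous_on_rho_deriv: "continuous_on {0..pi} (\<lambda>x. complex_of_real (rho_deriv V x))"
  unfolding rho_deriv_def by (intro continuous_intros V_cont) auto

lemma abs_rho_deriv_le: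
  assumes "x \<in> {0..pi}"
  shows "\<bar>rho_deriv V x\<bar> \<le> B"
proof -
  have "\<bar>integral {0..pi} V\<bar> \<le> B * pi" by (rule abs_integral_V_le) auto
  then have "\<bar>integral {0..pi} V / (2 * pi)\<bar> \<le> B / 2" by (simp add: abs_divide field_simps)
  moreover have "\<bar>V x / 2\<bar> \<le> B / 2" using V_bound[OF assms] by simp
  ultimately show ?thesis
    unfolding rho_deriv_def by linarith
qed

lemma abs_rho_le:
  assumes x: "x \<in> {0..pi}"
  shows "\<bar>rho V x\<bar> \<le> pi * B"
proof -
  have "\<bar>x / (2 * pi) * integral {0..pi} V\<bar> = x / (2 * pi) * \<bar>integral {0..pi} V\<bar>"
    using x by (simp add: abs_mult)
  also have "\<dots> \<le> x / (2 * pi) * (B * pi)"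
    using x abs_integral_V_le[of pi] by (intro mult_left_mono) auto
  finally have "\<bar>x / (2 * pi) * integral {0..pi} V\<bar> \<le> B * x / 2" by (simp add: mult.commute)
  moreover have "\<bar>1 / 2 * integral {0..x} V\<bar> \<le> B * x / 2" using abs_integral_V_le[OF x] by simp
  ultimately have "\<bar>rho V x\<bar> \<le> B * x" unfolding rho_def by linarith
  also have "\<dots> \<le> pi * B" using x B_nonneg by (simp add: mult.commute mult_left_mono)
  finally show ?thesis .
qed

lemma norm_integral_rho_mult_sin_le:
  fixes f f' :: "real \<Rightarrow> complex"
  assumes n: "1 \<le> n" and a: "0 \<le> a" "a \<le> pi"
    and f_deriv: "\<And>x. x \<in> {0..pi} \<Longrightarrow> (f has_vector_derivative f' x) (at x within {0..pi})"
    and f'_cont: "continuous_on {0..pi} f'"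
    and f_bound: "\<And>x. x \<in> {0..pi} \<Longrightarrow> norm (f x) \<le> A"
    and f'_bound: "\<And>x. x \<in> {0..pi} \<Longrightarrow> norm (f' x) \<le> A'"
  shows "norm (integral {0..a} (\<lambda>x. of_real (rho V x) * f x * of_real (sin (real n * x))))
    \<le> pi * B * (3 * A + pi * A') / real n"
proof -
  have sub: "{0..a} \<subseteq> {0..pi}" using a by auto
  have A: "0 \<le> A" by (rule order_trans[OF norm_ge_zero f_bound[of 0]]) simp
  have A': "0 \<le> A'" by (rule order_trans[OF norm_ge_zero f'_bound[of 0]]) simp
  have "norm (integral {0..a} (\<lambda>x. of_real (rho V x) * f x * of_real (sin (real n * x))))
    \<le> (2 * (pi * B * A) + a * (pi * B * A' + B * A)) / real n"
  proof (rule norm_integral_mult_sin_le[OF a(1) n])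
    fix x assume "x \<in> {0..a}"
    with sub have x: "x \<in> {0..pi}" by auto
    show "((\<lambda>x. of_real (rho V x) * f x) has_vector_derivative
        of_real (rho V x) * f' x + of_real (rho_deriv V x) * f x) (at x within {0..a})"
      by (rule has_vector_derivative_within_subset[OF _ sub], rule has_vector_derivative_mult)
        (rule rho_has_vector_derivative[OF x], rule f_deriv[OF x])
    show "norm (of_real (rho V x) * f x) \<le> pi * B * A"
      unfolding norm_mult norm_of_real using abs_rho_le[OF x] f_bound[OF x] B_nonneg
      by (intro mult_mono) auto
    have "norm (of_real (rho V x) * f' x) \<le> pi * B * A'"
      unfolding norm_mult norm_of_real using abs_rho_le[OF x] f'_bound[OF x] B_nonneg
      by (intro mult_mono) auto
    moreover have "norm (of_real (rho_deriv V x) * f x) \<le> B * A"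
      unfolding norm_mult norm_of_real using abs_rho_deriv_le[OF x] f_bound[OF x] B_nonneg
      by (intro mult_mono) auto
    ultimately show "norm (of_real (rho V x) * f' x + of_real (rho_deriv V x) * f x)
        \<le> pi * B * A' + B * A"
      by (meson add_mono norm_triangle_ineq order_trans)
  next
    show "continuous_on {0..a} (\<lambda>x. of_real (rho V x) * f' x + of_real (rho_deriv V x) * f x)"
      by (rule continuous_on_subset[OF _ sub])
        (intro continuous_intros continuous_on_rho continuous_on_rho_deriv f'_cont
          continuous_on_vector_derivative[OF f_deriv])
  qed
  also have "\<dots> \<le> pi * B * (3 * A + pi * A') / real n"
  proof (rule divide_right_mono)
    have "a * (pi * B * A' + B * A) \<le> pi * (pi * B * A' + B * A)"
      using a B_nonneg A A' by (intro mult_right_mono) auto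
    then show "2 * (pi * B * A) + a * (pi * B * A' + B * A) \<le> pi * B * (3 * A + pi * A')"
      by (simp add: algebra_simps)
  qed simp
  finally show ?thesis .
qed

lemma norm_integral_rho_cos_free_sin_le:
  assumes n: "1 \<le> n" and a: "0 \<le> a" "a \<le> pi"
  shows "norm (integral {0..a} (\<lambda>x. of_real (rho V x) * cos_free w x * of_real (sin (real n * x))))
    \<le> B * exp (pi * \<bar>Im w\<bar>) * (3 * pi + pi\<^sup>2 * norm w) / real n"
proof -
  define E where "E = exp (pi * \<bar>Im w\<bar>)"
  have "norm (integral {0..a} (\<lambda>x. of_real (rho V x) * cos_free w x * of_real (sin (real n * x))))
    \<le> pi * B * (3 * E + pi * (norm w * E)) / real n"
  proof (rule norm_integral_rho_mult_sin_le[OF n a has_vector_derivative_cos_free])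
    show "continuous_on {0..pi} (\<lambda>x. - (w * w) * sin_free w x)"
      by (intro continuous_intros continuous_on_sin_free)
    fix x assume "x \<in> {0..pi}"
    then show "norm (cos_free w x) \<le> E"
      using norm_cos_free_le_exp_pi[of x w] by (simp add: E_def)
    have "norm (- (w * w) * sin_free w x) = norm w * norm (w * sin_free w x)"
      by (simp add: norm_mult)
    also have "\<dots> \<le> norm w * E"
      using norm_mult_sin_free_le_exp_pi[of x w] \<open>x \<in> {0..pi}\<close>
      by (intro mult_left_mono) (auto simp: E_def)
    finally show "norm (- (w * w) * sin_free w x) \<le> norm w * E" .
  qed
  also have "\<dots> = B * E * (3 * pi + pi\<^sup>2 * norm w) / real n"
    by (simp add: algebra_simps power2_eq_square)
  finally show ?thesis by (simp add: E_def)
qed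

end

section \<open>Bounds for the Fourier coefficients\<close>

lemma norm_volterra_integral_le:
  fixes k g :: "real \<Rightarrow> complex" and V :: "real \<Rightarrow> real"
  assumes I: "((\<lambda>t. k (x - t) * (of_real (V t) * g t)) has_integral I) {0..x}"
    and x: "0 \<le> x" "x \<le> pi" and "0 \<le> \<tau>"
    and k_bound: "\<And>s. 0 \<le> s \<Longrightarrow> s \<le> x \<Longrightarrow> norm (k s) \<le> exp (\<tau> * s)"
    and V_bound: "\<And>t. t \<in> {0..x} \<Longrightarrow> \<bar>V t\<bar> \<le> B"
    and g_bound: "\<And>t. t \<in> {0..x} \<Longrightarrow> norm (g t) \<le> K * exp (\<tau> * t)"
  shows "norm I \<le> pi * B * K * exp (pi * \<tau>)"
proof -
  have B: "0 \<le> B" using V_bound[of 0] x by force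
  have "norm (g 0) \<le> K" using g_bound[of 0] x by simp
  then have K: "0 \<le> K" by (rule order_trans[OF norm_ge_zero])
  have "norm I \<le> B * K * exp (\<tau> * x) * Henstock_Kurzweil_Integration.content (cbox 0 x)"
  proof (rule has_integral_bound)
    show "0 \<le> B * K * exp (\<tau> * x)" using B K by simp
    show "((\<lambda>t. k (x - t) * (of_real (V t) * g t)) has_integral I) (cbox 0 x)" using I by simp
    fix t assume "t \<in> cbox 0 x"
    then have t: "t \<in> {0..x}" by simp
    have "norm (k (x - t) * (of_real (V t) * g t)) = norm (k (x - t)) * (\<bar>V t\<bar> * norm (g t))"
      by (simp add: norm_mult)
    also have "\<dots> \<le> exp (\<tau> * (x - t)) * (B * (K * exp (\<tau> * t)))"
      using t k_bound[of "x - t"] V_bound[OF t] g_bound[OF t] B by (intro mult_mono) auto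
    also have "\<dots> = B * K * (exp (\<tau> * (x - t)) * exp (\<tau> * t))" by (simp add: mult_ac)
    also have "\<dots> = B * K * exp (\<tau> * x)" by (simp add: algebra_simps flip: exp_add)
    finally show "norm (k (x - t) * (of_real (V t) * g t)) \<le> B * K * exp (\<tau> * x)" .
  qed
  also have "\<dots> \<le> B * K * exp (pi * \<tau>) * pi"
  proof -
    have "exp (\<tau> * x) \<le> exp (pi * \<tau>)"
      using mult_left_mono[OF x(2) \<open>0 \<le> \<tau>\<close>] by (simp add: mult.commute)
    then show ?thesis using x B K by (auto intro!: mult_mono)
  qed
  finally show ?thesis by (simp add: mult_ac)
qed

locale normalized_solution =
  schroedinger_solution V z w g g' + bounded_potential V B
  for V :: "real \<Rightarrow> real" and z w :: complex and g g' :: "real \<Rightarrow> complex" and B :: real +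
  assumes g_0: "g 0 = 1" and g'_0: "g' 0 = 0"
begin

lemma norm_g_le: "x \<in> {0..pi} \<Longrightarrow> norm (g x) \<le> exp (pi * pi * B) * exp (\<bar>Im w\<bar> * x)"
  using norm_le_gronwall[OF V_bound] g_0 g'_0 by simp

lemma deviation_has_integral:
  "x \<in> {0..pi} \<Longrightarrow>
    ((\<lambda>t. sin_free w (x - t) * (of_real (V t) * g t)) has_integral g x - cos_free w x) {0..x}"
  using variation_of_constants g_0 g'_0 by simp

lemma deviation_deriv_has_integral:
  "x \<in> {0..pi} \<Longrightarrow>
    ((\<lambda>t. cos_free w (x - t) * (of_real (V t) * g t)) has_integral g' x + z * sin_free w x) {0..x}"
  using variation_of_constants_deriv g_0 g'_0 by simp

lemma deviation_has_derivative:
  "x \<in> {0..pi} \<Longrightarrow>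
    ((\<lambda>x. g x - cos_free w x) has_vector_derivative g' x + z * sin_free w x) (at x within {0..pi})"
  using has_vector_derivative_diff[OF g_deriv has_vector_derivative_cos_free[of w]] w_square by simp

lemma deviation_deriv_has_derivative:
  "x \<in> {0..pi} \<Longrightarrow>
    ((\<lambda>x. g' x + z * sin_free w x) has_vector_derivative
      of_real (V x) * g x - z * (g x - cos_free w x)) (at x within {0..pi})"
  using has_vector_derivative_add[OF g'_deriv
      has_vector_derivative_mult_right[OF has_vector_derivative_sin_free]]
  by (simp add: algebra_simps)

lemma continuous_on_deviation_deriv: "continuous_on {0..pi} (\<lambda>x. g' x + z * sin_free w x)"
  by (rule continuous_on_vector_derivative) (rule deviation_deriv_has_derivative)

lemma continuous_on_deviation_deriv2:
  "continuous_on {0..pi} (\<lambda>x. of_real (V x) * g x - z * (g x - cos_free w x))"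
  by (intro continuous_intros V_cont continuous_on_g continuous_on_cos_free)

lemma norm_deviation_le:
  assumes x: "x \<in> {0..pi}"
  shows "norm (g x - cos_free w x) \<le> (exp (pi * pi * B) + 1) * exp (pi * \<bar>Im w\<bar>)"
proof -
  have "norm (g x) \<le> exp (pi * pi * B) * exp (pi * \<bar>Im w\<bar>)"
    using norm_g_le[OF x] exp_abs_Im_mult_le[of x w] x
    by (meson atLeastAtMost_iff exp_ge_zero mult_left_mono order_trans)
  moreover have "norm (cos_free w x) \<le> exp (pi * \<bar>Im w\<bar>)"
    using norm_cos_free_le_exp_pi x by auto
  ultimately show ?thesis
    using norm_triangle_ineq4[of "g x" "cos_free w x"] by (simp add: distrib_right)
qed

lemma norm_deviation_deriv_le:
  assumes x: "x \<in> {0..pi}"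
  shows "norm (g' x + z * sin_free w x) \<le> pi * B * exp (pi * pi * B) * exp (pi * \<bar>Im w\<bar>)"
  using x by (intro norm_volterra_integral_le[OF deviation_deriv_has_integral[OF x]])
    (auto simp: norm_g_le V_bound intro: order_trans[OF norm_cos_free_le])

lemma norm_mult_deviation_le:
  assumes x: "x \<in> {0..pi}"
  shows "norm (w * (g x - cos_free w x)) \<le> pi * B * exp (pi * pi * B) * exp (pi * \<bar>Im w\<bar>)"
proof (rule norm_volterra_integral_le[where k = "\<lambda>s. w * sin_free w s"])
  show "((\<lambda>t. w * sin_free w (x - t) * (of_real (V t) * g t)) has_integral w * (g x - cos_free w x))
    {0..x}"
    using has_integral_mult_right[OF deviation_has_integral[OF x], of w] by (simp add: mult.assoc)
qed (use x in \<open>auto simp: norm_g_le V_bound intro: order_trans[OF norm_mult_sin_free_le]\<close>)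

lemma norm_deviation_deriv2_le:
  assumes x: "x \<in> {0..pi}"
  shows "norm (of_real (V x) * g x - z * (g x - cos_free w x))
    \<le> (1 + pi * norm w) * B * exp (pi * pi * B) * exp (pi * \<bar>Im w\<bar>)"
proof -
  have "norm (of_real (V x) * g x) \<le> B * (exp (pi * pi * B) * exp (pi * \<bar>Im w\<bar>))"
    unfolding norm_mult norm_of_real
      using V_bound[OF x] norm_g_le[OF x] exp_abs_Im_mult_le[of x w] x
    by (intro mult_mono) (auto intro: order_trans)
  moreover have "norm (z * (g x - cos_free w x)) = norm w * norm (w * (g x - cos_free w x))"
    by (simp add: norm_mult flip: w_square)
  then have "norm (z * (g x - cos_free w x))
      \<le> norm w * (pi * B * exp (pi * pi * B) * exp (pi * \<bar>Im w\<bar>))"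
    using norm_mult_deviation_le[OF x] by (simp add: mult_left_mono)
  ultimately show ?thesis
    using norm_triangle_ineq4[of "of_real (V x) * g x" "z * (g x - cos_free w x)"]
    by (simp add: algebra_simps)
qed

lemma norm_integral_deviation_cos_le:
  assumes n: "1 \<le> n"
  shows "norm (integral {0..pi} (\<lambda>x. (g x - cos_free w x) * of_real (cos (real n * x))))
    \<le> B * exp (pi * pi * B) * exp (pi * \<bar>Im w\<bar>) * (3 * pi + pi\<^sup>2 * norm w) / (real n)\<^sup>2"
proof -
  define BKE where "BKE = B * exp (pi * pi * B) * exp (pi * \<bar>Im w\<bar>)"
  have "norm (integral {0..pi} (\<lambda>x. (g' x + z * sin_free w x) * of_real (sin (real n * x))))
    \<le> (2 * (pi * BKE) + pi * ((1 + pi * norm w) * BKE)) / real n"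
    using norm_deviation_deriv_le norm_deviation_deriv2_le unfolding BKE_def
    by (intro norm_integral_mult_sin_le[OF pi_ge_zero n deviation_deriv_has_derivative
          continuous_on_deviation_deriv2]) (auto simp: mult_ac)
  also have "\<dots> = BKE * (3 * pi + pi\<^sup>2 * norm w) / real n"
    by (simp add: algebra_simps power2_eq_square)
  finally have "norm (integral {0..pi} (\<lambda>x. (g' x + z * sin_free w x) * of_real (sin (real n * x))))
      / real n \<le> BKE * (3 * pi + pi\<^sup>2 * norm w) / real n / real n"
    by (rule divide_right_mono) simp
  moreover have "norm (integral {0..pi} (\<lambda>x. (g x - cos_free w x) * of_real (cos (real n * x))))
    = norm (integral {0..pi} (\<lambda>x. (g' x + z * sin_free w x) * of_real (sin (real n * x)))) / real n"
    using integral_mult_cos_by_parts[OF n deviation_has_derivative continuous_on_deviation_deriv]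
    by (simp add: norm_divide)
  ultimately show ?thesis by (simp add: BKE_def power2_eq_square)
qed

lemma norm_integral_rho_deviation_sin_le:
  assumes n: "1 \<le> n" and a: "0 \<le> a" "a \<le> pi"
  shows "norm (integral {0..a}
      (\<lambda>x. of_real (rho V x) * (g x - cos_free w x) * of_real (sin (real n * x))))
    \<le> (3 * pi * B * (exp (pi * pi * B) + 1) + pi ^ 3 * B\<^sup>2 * exp (pi * pi * B))
      * exp (pi * \<bar>Im w\<bar>) / real n"
proof -
  define K E where "K = exp (pi * pi * B)" and "E = exp (pi * \<bar>Im w\<bar>)"
  have "norm (integral {0..a}
      (\<lambda>x. of_real (rho V x) * (g x - cos_free w x) * of_real (sin (real n * x))))
    \<le> pi * B * (3 * ((K + 1) * E) + pi * (pi * B * K * E)) / real n"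
    using norm_deviation_le norm_deviation_deriv_le unfolding K_def E_def
    by (intro norm_integral_rho_mult_sin_le[OF n a deviation_has_derivative
          continuous_on_deviation_deriv]) auto
  also have "\<dots> = (3 * pi * B * (K + 1) + pi ^ 3 * B\<^sup>2 * K) * E / real n"
    by (simp add: algebra_simps power2_eq_square power3_eq_cube)
  finally show ?thesis by (simp add: K_def E_def)
qed

end

lemma one_plus_le_growth_factor:
  fixes s :: real
  assumes "0 \<le> s"
  shows "1 + s \<le> (2 + pi) * (1 + s\<^sup>2 / (1 + pi * s))"
proof -
  have d: "1 + pi * s > 0" using assms by (simp add: add_pos_nonneg)
  have "(2 + pi) * (1 + pi * s + s\<^sup>2) - (1 + s) * (1 + pi * s)
      = 1 + pi + (pi * s - s) + pi * (pi * s) + 2 * s\<^sup>2"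
    by (simp add: algebra_simps power2_eq_square)
  moreover have "s \<le> pi * s" using assms pi_gt3
    by (simp add: mult_right_mono[of 1 pi s, simplified])
  moreover have "0 \<le> pi * (pi * s)" using assms by simp
  ultimately have "(1 + s) * (1 + pi * s) \<le> (2 + pi) * (1 + pi * s + s\<^sup>2)"
    using pi_gt_zero zero_le_power2[of s] by linarith
  then have "1 + s \<le> (2 + pi) * (1 + pi * s + s\<^sup>2) / (1 + pi * s)"
    using d by (simp add: pos_le_divide_eq)
  also have "\<dots> = (2 + pi) * (1 + s\<^sup>2 / (1 + pi * s))"
    using d by (simp add: field_simps)
  finally show ?thesis .
qed

lemma linear_le_growth_factor:
  fixes r :: real
  assumes "0 \<le> r"
  shows "3 * pi + pi\<^sup>2 * sqrt r \<le> (3 * pi + pi ^ 3) * (2 + pi) * (1 + r / (1 + pi * sqrt r))"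
proof -
  have "pi\<^sup>2 \<le> pi ^ 3" by (rule power_increasing) (use pi_gt3 in auto)
  then have "pi\<^sup>2 \<le> 3 * pi + pi ^ 3" using pi_gt_zero by linarith
  then have "pi\<^sup>2 * sqrt r \<le> (3 * pi + pi ^ 3) * sqrt r"
    by (rule mult_right_mono) (use assms in simp)
  moreover have "(3 * pi + pi ^ 3) * (1 + sqrt r) = 3 * pi + pi ^ 3 + (3 * pi + pi ^ 3) * sqrt r"
    by (simp add: distrib_left)
  ultimately have "3 * pi + pi\<^sup>2 * sqrt r \<le> (3 * pi + pi ^ 3) * (1 + sqrt r)"
    using zero_less_power[OF pi_gt_zero, of 3] by linarith
  also have "\<dots> \<le> (3 * pi + pi ^ 3) * ((2 + pi) * (1 + r / (1 + pi * sqrt r)))"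
  proof (rule mult_left_mono)
    show "1 + sqrt r \<le> (2 + pi) * (1 + r / (1 + pi * sqrt r))"
      using one_plus_le_growth_factor[of "sqrt r"] assms by simp
  qed (use pi_gt_zero in simp)
  finally show ?thesis by (simp add: mult_ac)
qed

definition fourier_const :: "real \<Rightarrow> real" where
  "fourier_const B = (B + 1)\<^sup>2 * (exp (pi * pi * B) + 1) * (3 * pi + pi ^ 3) * (2 + pi)"

lemma fourier_const_pos: "0 \<le> B \<Longrightarrow> 0 < fourier_const B"
  by (auto simp: fourier_const_def intro!: mult_pos_pos add_pos_pos)

lemma fourier_const_ge:
  assumes B: "0 \<le> B"
  defines "K \<equiv> exp (pi * pi * B)"
  shows "B * K * ((3 * pi + pi ^ 3) * (2 + pi)) \<le> fourier_const B"
    and "B * ((3 * pi + pi ^ 3) * (2 + pi)) \<le> fourier_const B"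
    and "3 * pi * B * (K + 1) + pi ^ 3 * B\<^sup>2 * K \<le> fourier_const B"
proof -
  have K: "0 < K" by (simp add: K_def)
  have c: "0 < (3 * pi + pi ^ 3) * (2 + pi)" using pi_gt_zero
    by (intro mult_pos_pos add_pos_pos) auto
  have C_eq: "fourier_const B = (B + 1)\<^sup>2 * (K + 1) * ((3 * pi + pi ^ 3) * (2 + pi))"
    by (simp add: fourier_const_def K_def mult_ac)
  have B_le: "B \<le> (B + 1)\<^sup>2 * (K + 1)"
  proof -
    have "B \<le> (B + 1)\<^sup>2" using B by (simp add: power2_eq_square algebra_simps)
    also have "\<dots> \<le> (B + 1)\<^sup>2 * (K + 1)" using mult_left_mono[of 1 "K + 1" "(B + 1)\<^sup>2"] K by simp
    finally show ?thesis .
  qed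
  then show "B * ((3 * pi + pi ^ 3) * (2 + pi)) \<le> fourier_const B"
    unfolding C_eq using c by (intro mult_right_mono) auto
  have "B * K \<le> (B + 1)\<^sup>2 * (K + 1)"
    using B_le B K by (intro mult_mono) (auto simp: power2_eq_square algebra_simps)
  then show "B * K * ((3 * pi + pi ^ 3) * (2 + pi)) \<le> fourier_const B"
    unfolding C_eq using c by (intro mult_right_mono) auto
  have "B * (K + 1) \<le> (B + 1)\<^sup>2 * (K + 1)"
    using B K by (intro mult_right_mono) (auto simp: power2_eq_square algebra_simps)
  moreover have "B\<^sup>2 * K \<le> (B + 1)\<^sup>2 * (K + 1)"
    using B K by (intro mult_mono power_mono) auto
  ultimately have "3 * pi * (B * (K + 1)) + pi ^ 3 * (B\<^sup>2 * K)
      \<le> (3 * pi + pi ^ 3) * ((B + 1)\<^sup>2 * (K + 1))"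
    using pi_gt_zero by (simp add: distrib_right add_mono)
  also have "\<dots> \<le> (3 * pi + pi ^ 3) * (2 + pi) * ((B + 1)\<^sup>2 * (K + 1))"
  proof (rule mult_right_mono)
    have "0 < 3 * pi + pi ^ 3" using pi_gt_zero by (intro add_pos_pos) auto
    then show "3 * pi + pi ^ 3 \<le> (3 * pi + pi ^ 3) * (2 + pi)"
      by (intro mult_le_cancel_left1[THEN iffD2]) (use pi_gt_zero in auto)
  qed (use K in simp)
  finally show "3 * pi * B * (K + 1) + pi ^ 3 * B\<^sup>2 * K \<le> fourier_const B"
    by (simp add: C_eq mult_ac)
qed

context normalized_solution
begin

lemma fourier_coefficient_bounds:
  assumes n: "1 \<le> n" and a: "0 \<le> a" "a \<le> pi"
  defines "C \<equiv> fourier_const B" and "E \<equiv> exp (pi * \<bar>Im w\<bar>)"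
    and "d \<equiv> 1 + pi * sqrt (norm z)"
  shows "norm (integral {0..pi} (\<lambda>x. (g x - cos_free w x) * of_real (cos (real n * x))))
      \<le> C * E / (real n)\<^sup>2 * (1 + (1 + norm z) / d)"
    and "norm (integral {0..a} (\<lambda>x. of_real (rho V x) * cos_free w x * of_real (sin (real n * x))))
      \<le> C * E / real n * (1 + norm z / d)"
    and "norm (integral {0..a}
        (\<lambda>x. of_real (rho V x) * (g x - cos_free w x) * of_real (sin (real n * x))))
      \<le> C * E / real n * (1 + 1 / d)"
proof -
  define K where "K = exp (pi * pi * B)"
  have d: "0 < d" by (simp add: d_def add_pos_nonneg)
  have E: "0 \<le> E" by (simp add: E_def)
  have BK: "0 \<le> B * K" using B_nonneg by (simp add: K_def)
  have growth: "3 * pi + pi\<^sup>2 * norm w \<le> (3 * pi + pi ^ 3) * (2 + pi) * (1 + norm z / d)"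
    using linear_le_growth_factor[of "norm z"] by (simp add: norm_w d_def)
  have R: "1 + norm z / d \<le> 1 + (1 + norm z) / d" "1 \<le> 1 + 1 / d"
    using d by (simp_all add: divide_right_mono)
  have "B * K * (3 * pi + pi\<^sup>2 * norm w)
      \<le> B * K * ((3 * pi + pi ^ 3) * (2 + pi)) * (1 + (1 + norm z) / d)"
    using mult_left_mono[OF order_trans[OF growth mult_left_mono[OF R(1)]] BK] pi_gt_zero
    by (simp add: mult_ac)
  also have "\<dots> \<le> C * (1 + (1 + norm z) / d)"
    using fourier_const_ge(1)[OF B_nonneg] d by (intro mult_right_mono) (simp_all add: C_def K_def)
  finally have "B * K * (3 * pi + pi\<^sup>2 * norm w) * (E / (real n)\<^sup>2)
      \<le> C * (1 + (1 + norm z) / d) * (E / (real n)\<^sup>2)"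
    by (rule mult_right_mono) (use E in simp)
  then show "norm (integral {0..pi} (\<lambda>x. (g x - cos_free w x) * of_real (cos (real n * x))))
      \<le> C * E / (real n)\<^sup>2 * (1 + (1 + norm z) / d)"
    using norm_integral_deviation_cos_le[OF n] by (simp add: K_def E_def mult_ac)
  have "B * (3 * pi + pi\<^sup>2 * norm w) \<le> B * ((3 * pi + pi ^ 3) * (2 + pi)) * (1 + norm z / d)"
    using mult_left_mono[OF growth B_nonneg] by (simp add: mult_ac)
  also have "\<dots> \<le> C * (1 + norm z / d)"
    using fourier_const_ge(2)[OF B_nonneg] d by (intro mult_right_mono) (simp_all add: C_def)
  finally have "B * (3 * pi + pi\<^sup>2 * norm w) * (E / real n) \<le> C * (1 + norm z / d) * (E / real n)"
    by (rule mult_right_mono) (use E in simp)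
  then show "norm (integral {0..a}
        (\<lambda>x. of_real (rho V x) * cos_free w x * of_real (sin (real n * x))))
      \<le> C * E / real n * (1 + norm z / d)"
    using norm_integral_rho_cos_free_sin_le[OF n a, of w] by (simp add: E_def mult_ac)
  have "3 * pi * B * (K + 1) + pi ^ 3 * B\<^sup>2 * K \<le> C * (1 + 1 / d)"
    using fourier_const_ge(3)[OF B_nonneg] fourier_const_pos[OF B_nonneg] R(2)
    by (simp add: C_def K_def mult_le_cancel_left1 order_trans)
  then have "(3 * pi * B * (K + 1) + pi ^ 3 * B\<^sup>2 * K) * (E / real n)
      \<le> C * (1 + 1 / d) * (E / real n)"
    by (rule mult_right_mono) (use E in simp)
  then show "norm (integral {0..a}
        (\<lambda>x. of_real (rho V x) * (g x - cos_free w x) * of_real (sin (real n * x))))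
      \<le> C * E / real n * (1 + 1 / d)"
    using norm_integral_rho_deviation_sin_le[OF n a] by (simp add: K_def E_def mult_ac)
qed

end

lemma (in bounded_potential) xi_fourier_coefficient_bounds:
  fixes z :: complex
  assumes n: "1 \<le> n" and a: "0 \<le> a" "a \<le> pi"
  defines "E \<equiv> exp (pi * \<bar>Im (csqrt z)\<bar>)" and "d \<equiv> 1 + pi * sqrt (cmod z)"
  shows "cmod (integral {0..pi} (\<lambda>x. F V x z * complex_of_real (cos (real n * x))))
      \<le> fourier_const B * E / (real n)\<^sup>2 * (1 + (1 + cmod z) / d)"
    and "cmod (integral {0..a} (\<lambda>x. complex_of_real (rho V x) * cos (csqrt z * complex_of_real x)
        * complex_of_real (sin (real n * x))))
      \<le> fourier_const B * E / real n * (1 + cmod z / d)"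
    and "cmod (integral {0..a} (\<lambda>x. complex_of_real (rho V x) * F V x z
        * complex_of_real (sin (real n * x))))
      \<le> fourier_const B * E / real n * (1 + 1 / d)"
proof -
  obtain q where "schroedinger_solution V z (csqrt z) (\<lambda>x. xi V x z) q" "xi V 0 z = 1" "q 0 = 0"
    using xi_is_solution[OF V_cont, of "csqrt z" z] power2_csqrt[of z] by (metis power2_eq_square)
  then interpret normalized_solution V z "csqrt z" "\<lambda>x. xi V x z" q B
    using bounded_potential_axioms
      by (simp add: normalized_solution_def normalized_solution_axioms_def)
  note bounds = fourier_coefficient_bounds[OF n a]
  show "cmod (integral {0..pi} (\<lambda>x. F V x z * complex_of_real (cos (real n * x))))
      \<le> fourier_const B * E / (real n)\<^sup>2 * (1 + (1 + cmod z) / d)"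
    using bounds(1) by (simp add: F_def cos_free_def E_def d_def)
  show "cmod (integral {0..a} (\<lambda>x. complex_of_real (rho V x) * cos (csqrt z * complex_of_real x)
        * complex_of_real (sin (real n * x))))
      \<le> fourier_const B * E / real n * (1 + cmod z / d)"
    using bounds(2) by (simp add: cos_free_def E_def d_def)
  show "cmod (integral {0..a} (\<lambda>x. complex_of_real (rho V x) * F V x z
        * complex_of_real (sin (real n * x))))
      \<le> fourier_const B * E / real n * (1 + 1 / d)"
    using bounds(3) by (simp add: F_def cos_free_def E_def d_def)
qed

theorem lemmaA4:
  fixes V :: "real \<Rightarrow> real" and a :: real
  assumes V_ac: "absolutely_continuous_on {0..pi} V"
    and a_pos: "0 < a" and a_le: "a \<le> pi"
  shows "\<exists>C1>0. \<exists>C2>0. \<exists>C3>0. \<forall>(z::complex) (n::nat). n \<ge> 1 \<longrightarrow>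
     cmod (integral {0..pi} (\<lambda>x. F V x z * complex_of_real (cos (real n * x))))
       \<le> C1 * exp (pi * \<bar>Im (csqrt z)\<bar>) / (real n)^2
            * (1 + (1 + cmod z) / (1 + pi * sqrt (cmod z)))
   \<and> cmod (integral {0..a} (\<lambda>x. complex_of_real (rho V x) * cos (csqrt z * complex_of_real x)
                                  * complex_of_real (sin (real n * x))))
       \<le> C2 * exp (pi * \<bar>Im (csqrt z)\<bar>) / real n
            * (1 + cmod z / (1 + pi * sqrt (cmod z)))
   \<and> cmod (integral {0..a} (\<lambda>x. complex_of_real (rho V x) * F V x z
                                  * complex_of_real (sin (real n * x))))
       \<le> C3 * exp (pi * \<bar>Im (csqrt z)\<bar>) / real n
            * (1 + 1 / (1 + pi * sqrt (cmod z)))"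
proof -
  have V_cont: "continuous_on {0..pi} V"
    by (rule absolutely_continuous_on_imp_continuous_on[OF V_ac])
  then obtain B where "bounded_potential V B"
    using continuous_on_imp_abs_bounded by (metis bounded_potential.intro)
  then interpret bounded_potential V B .
  show ?thesis
    using xi_fourier_coefficient_bounds[OF _ less_imp_le[OF a_pos] a_le]
      fourier_const_pos[OF B_nonneg]
    by (intro exI[of _ "fourier_const B"] conjI allI impI) auto
qed

end
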